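(* Let $G$ be a second countable locally compact abelian group, $\varLambda\subseteq G$ a set of finite local complexity, and $\mathcal{A}=(A_n)_n$ a van Hove sequence. Let $F_n=\varLambda\cap A_n$ and assume (a) $\lim_{n\to\infty}\mathrm{card}(F_n)=\infty$, and (b) for all $0\ne t\in\varLambda-\varLambda$, $\mathrm{card}(\varLambda\cap(-t+\varLambda))<\infty$. Then the counting autocorrelation of $\varLambda$ exists with respect to $\mathcal{A}$ and $\gamma_{\mathrm{count}}=\delta_0$.
   Context: Finite local complexity: $\varLambda-\varLambda$ is locally finite (every compact set meets it in finitely many points). A van Hove sequence is a sequence of compact sets $A_n$ of positive Haar measure with $\mathrm{vol}(\partial^K A_n)/\mathrm{vol}(A_n)\to0$ for all compact $K$, where $\partial^K A=((A+K)\setminus A^\circ)\cup((\overline{G\setminus A}-K)\cap A)$. For finite $F$, $\gamma_F=\frac{1}{\mathrm{card}(F)}\sum_{x,y\in F}\delta_{x-y}$ if $F\ne\emptyset$, $\gamma_\emptyset=0$; the counting autocorrelation is the vague limit of $\gamma_{F_n}$. *)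

theory Defs
  imports "HOL-Analysis.Analysis"
begin

text \<open>Haar measure on a locally compact abelian group (the library has none):
  a translation-invariant Borel measure, finite on compact sets and positive on
  nonempty open sets.  (In a second countable locally compact Hausdorff space such
  a locally finite Borel measure is automatically regular.)\<close>
definition haar_measure :: "'a::topological_ab_group_add measure \<Rightarrow> bool" where
  "haar_measure \<mu> \<longleftrightarrow>
     sets \<mu> = sets borel \<and>
     (\<forall>A\<in>sets borel. \<forall>x. emeasure \<mu> ((\<lambda>a. x + a) ` A) = emeasure \<mu> A) \<and>
     (\<forall>K. compact K \<longrightarrow> emeasure \<mu> K < \<infinity>) \<and>
     (\<forall>U. open U \<and> U \<noteq> {} \<longrightarrow> emeasure \<mu> U > 0)"

definition set_plus :: "'a::ab_group_add set \<Rightarrow> 'a set \<Rightarrow> 'a set" where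
  "set_plus A B = {a + b | a b. a \<in> A \<and> b \<in> B}"

definition set_minus :: "'a::ab_group_add set \<Rightarrow> 'a set \<Rightarrow> 'a set" where
  "set_minus A B = {a - b | a b. a \<in> A \<and> b \<in> B}"

definition vh_boundary :: "'a::topological_ab_group_add set \<Rightarrow> 'a set \<Rightarrow> 'a set" where
  "vh_boundary K A =
     ((set_plus A K - interior A) \<union> (set_minus (closure (UNIV - A)) K \<inter> A))"

definition van_Hove :: "'a::topological_ab_group_add measure \<Rightarrow> (nat \<Rightarrow> 'a set) \<Rightarrow> bool" where
  "van_Hove \<mu> A \<longleftrightarrow>
     (\<forall>n. compact (A n) \<and> emeasure \<mu> (A n) > 0) \<and>
     (\<forall>K. compact K \<longrightarrow>
        (\<lambda>n. measure \<mu> (vh_boundary K (A n)) / measure \<mu> (A n)) \<longlonglongrightarrow> 0)"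

definition finite_local_complexity :: "'a::topological_ab_group_add set \<Rightarrow> bool" where
  "finite_local_complexity \<Lambda> \<longleftrightarrow>
     (\<forall>K. compact K \<longrightarrow> finite (K \<inter> set_minus \<Lambda> \<Lambda>))"

definition Cc :: "('a::topological_space \<Rightarrow> complex) set" where
  "Cc = {f. continuous_on UNIV f \<and> compact (closure {x. f x \<noteq> 0})}"

text \<open>Radon measures are represented as linear functionals on C_c(G).
  gamma_F for a finite set F, and the Dirac measure at 0.\<close>
definition gamma_fin :: "'a::ab_group_add set \<Rightarrow> ('a \<Rightarrow> complex) \<Rightarrow> complex" where
  "gamma_fin F f = (if F = {} then 0
      else (1 / of_nat (card F)) * (\<Sum>x\<in>F. \<Sum>y\<in>F. f (x - y)))"

definition dirac0 :: "('a::zero \<Rightarrow> complex) \<Rightarrow> complex" where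
  "dirac0 f = f 0"

definition vague_lim ::
  "(nat \<Rightarrow> ('a::topological_space \<Rightarrow> complex) \<Rightarrow> complex) \<Rightarrow> (('a \<Rightarrow> complex) \<Rightarrow> complex) \<Rightarrow> bool" where
  "vague_lim \<gamma>s \<gamma> \<longleftrightarrow> (\<forall>f\<in>Cc. (\<lambda>n. \<gamma>s n f) \<longlonglongrightarrow> \<gamma> f)"

definition counting_autocorrelation ::
  "'a::topological_ab_group_add set \<Rightarrow> (nat \<Rightarrow> 'a set) \<Rightarrow> (('a \<Rightarrow> complex) \<Rightarrow> complex) \<Rightarrow> bool" where
  "counting_autocorrelation \<Lambda> A \<gamma> \<longleftrightarrow> vague_lim (\<lambda>n. gamma_fin (\<Lambda> \<inter> A n)) \<gamma>"

end

theory Submission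
  imports Defs
begin

text \<open>Grouping the pairs of a finite set F by their difference t gives
  \<open>card F \<cdot> (\<gamma>\<^sub>F(f) - f(0)) = \<Sum>\<^bsub>t \<noteq> 0\<^esub> f(t) \<cdot> card {(x,y) \<in> F\<times>F. x - y = t}\<close>.
  By finite local complexity only the finitely many \<open>t \<in> supp f \<inter> (\<Lambda> - \<Lambda>)\<close> contribute,
  and for each of them the count is at most \<open>card (\<Lambda> \<inter> (-t + \<Lambda>))\<close>, a bound independent
  of F.  Hence \<open>\<gamma>\<^bsub>F\<^sub>n\<^esub>(f) - f(0) = O(1 / card F\<^sub>n) \<rightarrow> 0\<close>.  Only \<open>F\<^sub>n \<subseteq> \<Lambda>\<close> and
  \<open>card F\<^sub>n \<rightarrow> \<infinity>\<close> enter the argument.\<close>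

lemma double_sum_diff_eq_sum_over_differences:
  fixes F T :: "'a::ab_group_add set" and f :: "'a \<Rightarrow> 'b::semiring_1"
  assumes "finite F" "finite T"
    and "\<And>x y. x \<in> F \<Longrightarrow> y \<in> F \<Longrightarrow> f (x - y) \<noteq> 0 \<Longrightarrow> x - y \<in> T"
  shows "(\<Sum>x\<in>F. \<Sum>y\<in>F. f (x - y)) = (\<Sum>t\<in>T. of_nat (card {(x, y)\<in>F \<times> F. x - y = t}) * f t)"
proof -
  define S where "S = {(x, y)\<in>F \<times> F. x - y \<in> T}"
  have "finite (F \<times> F)" using assms(1) by simp
  then have "finite S" unfolding S_def by (rule rev_finite_subset) auto
  have "(\<Sum>x\<in>F. \<Sum>y\<in>F. f (x - y)) = (\<Sum>(x, y)\<in>F \<times> F. f (x - y))"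
    by (simp add: sum.cartesian_product)
  also have "\<dots> = (\<Sum>(x, y)\<in>S. f (x - y))"
    using \<open>finite (F \<times> F)\<close> assms(3)
    by (intro sum.mono_neutral_right) (auto simp: S_def)
  also have "\<dots> = (\<Sum>t\<in>T. \<Sum>(x, y)\<in>{p\<in>S. (\<lambda>(x, y). x - y) p = t}. f (x - y))"
    by (rule sum.group[symmetric, OF \<open>finite S\<close> assms(2)]) (auto simp: S_def)
  also have "\<dots> = (\<Sum>t\<in>T. of_nat (card {(x, y)\<in>F \<times> F. x - y = t}) * f t)"
  proof (rule sum.cong)
    fix t assume "t \<in> T"
    then have "{p\<in>S. (\<lambda>(x, y). x - y) p = t} = {(x, y)\<in>F \<times> F. x - y = t}"
      by (auto simp: S_def)
    moreover have "(\<Sum>(x, y)\<in>{(x, y)\<in>F \<times> F. x - y = t}. f (x - y))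
        = (\<Sum>p\<in>{(x, y)\<in>F \<times> F. x - y = t}. f t)"
      by (intro sum.cong) auto
    ultimately show "(\<Sum>(x, y)\<in>{p\<in>S. (\<lambda>(x, y). x - y) p = t}. f (x - y))
        = of_nat (card {(x, y)\<in>F \<times> F. x - y = t}) * f t"
      by simp
  qed simp
  finally show ?thesis .
qed

lemma card_pairs_diff_zero:
  fixes F :: "'a::ab_group_add set"
  shows "card {(x, y)\<in>F \<times> F. x - y = 0} = card F"
proof -
  have "{(x, y)\<in>F \<times> F. x - y = 0} = (\<lambda>x. (x, x)) ` F" by auto
  then show ?thesis by (simp add: card_image inj_on_def)
qed

lemma card_pairs_diff_le_card_inter_translate:
  fixes \<Lambda> F :: "'a::ab_group_add set"
  assumes "F \<subseteq> \<Lambda>" "finite (\<Lambda> \<inter> (\<lambda>x. - t + x) ` \<Lambda>)"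
  shows "card {(x, y)\<in>F \<times> F. x - y = t} \<le> card (\<Lambda> \<inter> (\<lambda>x. - t + x) ` \<Lambda>)"
proof (rule card_inj_on_le[OF _ _ assms(2)])
  show "inj_on snd {(x, y)\<in>F \<times> F. x - y = t}" by (auto simp: inj_on_def)
  have "y = - t + x" if "x - y = t" for x y :: 'a
    using that by (simp add: algebra_simps)
  then show "snd ` {(x, y)\<in>F \<times> F. x - y = t} \<subseteq> \<Lambda> \<inter> (\<lambda>x. - t + x) ` \<Lambda>"
    using assms(1) by auto
qed

lemma norm_double_sum_diff_minus_diagonal_le:
  fixes \<Lambda> F T :: "'a::ab_group_add set" and f :: "'a \<Rightarrow> 'b::real_normed_algebra_1"
  assumes "F \<subseteq> \<Lambda>" "finite F" "finite T" "0 \<notin> T"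
    and "\<And>x y. x \<in> \<Lambda> \<Longrightarrow> y \<in> \<Lambda> \<Longrightarrow> x \<noteq> y \<Longrightarrow> f (x - y) \<noteq> 0 \<Longrightarrow> x - y \<in> T"
    and "\<And>t. t \<in> T \<Longrightarrow> finite (\<Lambda> \<inter> (\<lambda>x. - t + x) ` \<Lambda>)"
  shows "norm ((\<Sum>x\<in>F. \<Sum>y\<in>F. f (x - y)) - of_nat (card F) * f 0)
     \<le> (\<Sum>t\<in>T. norm (f t) * real (card (\<Lambda> \<inter> (\<lambda>x. - t + x) ` \<Lambda>)))"
proof -
  have "(\<Sum>x\<in>F. \<Sum>y\<in>F. f (x - y))
      = (\<Sum>t\<in>insert 0 T. of_nat (card {(x, y)\<in>F \<times> F. x - y = t}) * f t)"
    using assms(1,3,5) by (intro double_sum_diff_eq_sum_over_differences assms(2)) auto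
  also have "\<dots> = of_nat (card F) * f 0 + (\<Sum>t\<in>T. of_nat (card {(x, y)\<in>F \<times> F. x - y = t}) * f t)"
    using assms(3,4) card_pairs_diff_zero[of F] by simp
  finally have "norm ((\<Sum>x\<in>F. \<Sum>y\<in>F. f (x - y)) - of_nat (card F) * f 0)
      = norm (\<Sum>t\<in>T. of_nat (card {(x, y)\<in>F \<times> F. x - y = t}) * f t)"
    by simp
  also have "\<dots> \<le> (\<Sum>t\<in>T. norm (f t) * real (card {(x, y)\<in>F \<times> F. x - y = t}))"
    by (intro order_trans[OF norm_sum] sum_mono order_trans[OF norm_mult_ineq])
       (simp add: mult.commute)
  also have "\<dots> \<le> (\<Sum>t\<in>T. norm (f t) * real (card (\<Lambda> \<inter> (\<lambda>x. - t + x) ` \<Lambda>)))"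
    using assms(1,6)
    by (intro sum_mono mult_left_mono of_nat_mono card_pairs_diff_le_card_inter_translate) auto
  finally show ?thesis .
qed

lemma norm_gamma_fin_minus_dirac0_le:
  fixes F :: "'a::ab_group_add set" and f :: "'a \<Rightarrow> complex"
  assumes "finite F" "F \<noteq> {}"
    and "norm ((\<Sum>x\<in>F. \<Sum>y\<in>F. f (x - y)) - of_nat (card F) * f 0) \<le> M"
  shows "norm (gamma_fin F f - dirac0 f) \<le> M / real (card F)"
proof -
  have "card F > 0" using assms(1,2) by (simp add: card_gt_0_iff)
  then have "gamma_fin F f - dirac0 f
      = ((\<Sum>x\<in>F. \<Sum>y\<in>F. f (x - y)) - of_nat (card F) * f 0) / of_nat (card F)"
    using assms(2) by (simp add: gamma_fin_def dirac0_def field_simps)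
  then show ?thesis
    using assms(3) \<open>card F > 0\<close> by (simp add: norm_divide divide_right_mono)
qed

theorem lemma4p1:
  fixes \<Lambda> :: "'a::{topological_ab_group_add, t2_space, second_countable_topology} set"
    and A :: "nat \<Rightarrow> 'a set"
    and \<mu> :: "'a measure"
  assumes "locally_compact_space (euclidean :: 'a topology)"
    and "haar_measure \<mu>"
    and "finite_local_complexity \<Lambda>"
    and "van_Hove \<mu> A"
    and "filterlim (\<lambda>n. card (\<Lambda> \<inter> A n)) at_top sequentially"
    and "\<forall>t\<in>set_minus \<Lambda> \<Lambda>. t \<noteq> 0 \<longrightarrow> finite (\<Lambda> \<inter> (\<lambda>x. - t + x) ` \<Lambda>)"
  shows "counting_autocorrelation \<Lambda> A dirac0"
  unfolding counting_autocorrelation_def vague_lim_def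
proof
  fix f :: "'a \<Rightarrow> complex" assume "f \<in> Cc"
  define T where "T = (closure {x. f x \<noteq> 0} \<inter> set_minus \<Lambda> \<Lambda>) - {0}"
  define M where "M = (\<Sum>t\<in>T. norm (f t) * real (card (\<Lambda> \<inter> (\<lambda>x. - t + x) ` \<Lambda>)))"
  have "finite T"
    using assms(3) \<open>f \<in> Cc\<close> by (auto simp: T_def Cc_def finite_local_complexity_def)
  have "norm (gamma_fin F f - dirac0 f) \<le> M / real (card F)" if "F \<subseteq> \<Lambda>" "card F \<ge> 1" for F
  proof (rule norm_gamma_fin_minus_dirac0_le)
    show "finite F" "F \<noteq> {}"
      using that by (auto intro: card_ge_0_finite)
    have "x - y \<in> T" if "x \<in> \<Lambda>" "y \<in> \<Lambda>" "x \<noteq> y" "f (x - y) \<noteq> 0" for x y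
      using that closure_subset unfolding T_def set_minus_def by fastforce
    then show "norm ((\<Sum>x\<in>F. \<Sum>y\<in>F. f (x - y)) - of_nat (card F) * f 0) \<le> M"
      unfolding M_def using assms(6) \<open>F \<subseteq> \<Lambda>\<close> \<open>finite F\<close> \<open>finite T\<close>
      by (intro norm_double_sum_diff_minus_diagonal_le) (auto simp: T_def)
  qed
  moreover have "eventually (\<lambda>n. card (\<Lambda> \<inter> A n) \<ge> 1) sequentially"
    using assms(5) by (simp add: filterlim_at_top)
  ultimately have "eventually (\<lambda>n. norm (gamma_fin (\<Lambda> \<inter> A n) f - dirac0 f)
      \<le> M / real (card (\<Lambda> \<inter> A n))) sequentially"
    by (auto elim: eventually_mono)
  moreover have "(\<lambda>n. M / real (card (\<Lambda> \<inter> A n))) \<longlonglongrightarrow> 0"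
    using filterlim_compose[OF filterlim_real_sequentially assms(5)]
    by (rule tendsto_divide_0[OF tendsto_const filterlim_at_top_imp_at_infinity])
  ultimately show "(\<lambda>n. gamma_fin (\<Lambda> \<inter> A n) f) \<longlonglongrightarrow> dirac0 f"
    by (rule LIM_zero_cancel[OF Lim_null_comparison])
qed

end
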